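(* Let $M$, $h_r$, $a_r=h_r(0)$ be as described, and define $K_r(u)=e^{-a_r/n}\big(h_r(u)-a_r\big)$ for $u\in[0,r)$. Then $K_r$ solves $K_r''(K_r')^{n-1}=\exp\big(e^{a_r/n}K_r\big)\mathcal D_M(u)$ on $[0,r)$ with $K_r\to\infty$ as $u\to r$ (so it is a Kähler potential of the complete Kähler–Einstein metric of Ricci curvature $-e^{a_r/n}$ on $T^rM$), $K_r\ge0$, and as $r\to\infty$ the family $\{K_r\}$ converges uniformly on compact subsets of $[0,\infty)$ to a continuous function $K$.
   Context: $M$ is $\mathbb R^n$ or a compact rank-one symmetric space of real dimension $n\ge2$; $u=\sqrt\rho$, $\rho(x,v)=4|v|^2$ on $TM$ with the adapted complex structure; $T^rM=\{|v|<r/2\}$. $\mathcal D_M(u)=u^{n-1}$ for $\mathbb R^n$; $(\sinh u)^{n-1}$ for the round sphere and real projective space; $2^{n-1}(\cosh\frac u2)^k(\sinh\frac u2)^{n-1}$, $k=1,3,7$, for complex projective space, quaternionic projective space, Cayley plane. For $r>0$, $h_r$ is the unique solution, real-analytic in $u^2$, of $h_r''(h_r')^{n-1}=e^{h_r}\mathcal D_M(u)$ on $[0,r)$ with $\lim_{u\to r}h_r=\infty$. *)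

theory Defs
  imports "HOL-Analysis.Analysis"
begin

datatype model_space = Euclid | Sphere | RealProj | ComplexProj | QuatProj | CayleyPlane

fun admissible_dim :: "model_space \<Rightarrow> nat \<Rightarrow> bool" where
  "admissible_dim Euclid n = (n \<ge> 2)"
| "admissible_dim Sphere n = (n \<ge> 2)"
| "admissible_dim RealProj n = (n \<ge> 2)"
| "admissible_dim ComplexProj n = (n \<ge> 2 \<and> even n)"
| "admissible_dim QuatProj n = (n \<ge> 4 \<and> 4 dvd n)"
| "admissible_dim CayleyPlane n = (n = 16)"

fun DM :: "model_space \<Rightarrow> nat \<Rightarrow> real \<Rightarrow> real" where
  "DM Euclid n u = u ^ (n - 1)"
| "DM Sphere n u = (sinh u) ^ (n - 1)"
| "DM RealProj n u = (sinh u) ^ (n - 1)"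
| "DM ComplexProj n u = 2 ^ (n - 1) * (cosh (u/2)) ^ 1 * (sinh (u/2)) ^ (n - 1)"
| "DM QuatProj n u = 2 ^ (n - 1) * (cosh (u/2)) ^ 3 * (sinh (u/2)) ^ (n - 1)"
| "DM CayleyPlane n u = 2 ^ (n - 1) * (cosh (u/2)) ^ 7 * (sinh (u/2)) ^ (n - 1)"

definition real_analytic_on :: "(real \<Rightarrow> real) \<Rightarrow> real set \<Rightarrow> bool" where
  "real_analytic_on g S \<longleftrightarrow>
     (\<forall>x\<in>S. \<exists>c e. e > 0 \<and> (\<forall>y. \<bar>y - x\<bar> < e \<longrightarrow> (\<lambda>k. c k * (y - x) ^ k) sums g y))"

definition solves_MA :: "nat \<Rightarrow> real \<Rightarrow> (real \<Rightarrow> real) \<Rightarrow> (real \<Rightarrow> real) \<Rightarrow> bool" where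
  "solves_MA n r f R \<longleftrightarrow>
     (\<exists>f1 f2. \<forall>u\<in>{0..<r}.
        (f has_real_derivative f1 u) (at u within {0..<r}) \<and>
        (f1 has_real_derivative f2 u) (at u within {0..<r}) \<and>
        f2 u * (f1 u) ^ (n - 1) = R u)"

end

theory Submission
  imports Defs
begin

(*
  Fix the radial density D = D_M and put F(u) = int_0^u n D and
  K_inf(u) = int_0^u F^(1/n).  For a solution h of h'' h'^(n-1) = e^h D on [0,r)
  with h'(0) = 0 (which follows from h being analytic in u^2) and h -> oo at r:

  (1) h' > 0, so h is increasing, and (h'^n)' = n e^h D gives the gradient bounds
      e^(h(0)) F <= h'^n <= e^(h(u)) F;
  (2) integrating these bounds, c = e^(-h(0)/n) and K = c (h - h(0)) satisfy
      K_inf <= K   and   n c (1 - exp(-K/(n c))) <= K_inf;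
  (3) a three-step comparison argument (h gains ln 2 quickly; afterwards
      h' >= c e^(h/(n+1)); then e^(-h/(n+1)) reaches 0 within bounded distance)
      bounds the radius, r <= B(h(0)) with B decreasing, so h_r(0) -> -oo and
      the scales n c_r -> oo as r -> oo.

  The rescaling statement of the theorem is a direct computation; K_r >= 0 is (1);
  and (2) together with (3) squeezes K_r uniformly onto K_inf on compact sets.
*)

lemma nonneg_deriv_imp_le:
  fixes f f' :: "real \<Rightarrow> real"
  assumes der: "\<And>x. x \<in> {0..<r} \<Longrightarrow> (f has_real_derivative f' x) (at x within {0..<r})"
    and "0 \<le> a" "a \<le> b" "b < r"
    and nonneg: "\<And>x. a < x \<Longrightarrow> x < b \<Longrightarrow> f' x \<ge> 0"
  shows "f a \<le> f b"
proof (rule DERIV_nonneg_imp_increasing_open[OF \<open>a \<le> b\<close>])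
  fix x assume x: "a < x" "x < b"
  have "at x within {0..<r} = at x"
    by (rule at_within_interior) (use x assms in auto)
  with der[of x] x assms show "\<exists>y. DERIV f x :> y \<and> y \<ge> 0"
    using nonneg[OF x] by auto
next
  have "continuous_on {0..<r} f"
    using der by (meson DERIV_continuous continuous_on_eq_continuous_within)
  thus "continuous_on {a..b} f"
    by (rule continuous_on_subset) (use assms in auto)
qed

lemma antiderivative_exists:
  fixes \<phi> :: "real \<Rightarrow> real"
  assumes "continuous_on {0..} \<phi>"
  shows "\<exists>P. P 0 = 0 \<and> (\<forall>u\<ge>0. (P has_real_derivative \<phi> u) (at u within {0..}))"
proof (intro exI[where x = "\<lambda>x. integral {0..x} \<phi>"] conjI allI impI)
  show "integral {0..0} \<phi> = 0" by simp
  fix u :: real assume u: "u \<ge> 0"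
  have "continuous_on {0..u+1} \<phi>" by (rule continuous_on_subset[OF assms]) auto
  hence "((\<lambda>x. integral {0..x} \<phi>) has_real_derivative \<phi> u) (at u within {0..u+1})"
    by (rule integral_has_real_derivative) (use u in auto)
  moreover have "at u within {0..u+1} = at u within {0..}"
    by (rule at_within_nhd[where S = "{..<u+1}"]) auto
  ultimately show "((\<lambda>x. integral {0..x} \<phi>) has_real_derivative \<phi> u) (at u within {0..})"
    by simp
qed

lemma exp_div_power: "m > 0 \<Longrightarrow> exp (x / real m) ^ m = exp x"
  by (simp flip: exp_of_nat_mult)

lemma power_le_imp_le_base_pos: "(a::real) ^ m \<le> b ^ m \<Longrightarrow> 0 \<le> b \<Longrightarrow> m > 0 \<Longrightarrow> a \<le> b"
  by (metis gr0_implies_Suc power_le_imp_le_base)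

subsection \<open>Real-analytic functions of u^2 are flat at the origin\<close>

lemma real_analytic_differentiable:
  fixes g :: "real \<Rightarrow> real"
  assumes "real_analytic_on g S" and "x \<in> S"
  shows "\<exists>g'. (g has_real_derivative g') (at x)"
proof -
  obtain c e where e: "e > 0" "\<And>y. \<bar>y - x\<bar> < e \<Longrightarrow> (\<lambda>k. c k * (y - x) ^ k) sums g y"
    using assms unfolding real_analytic_on_def by blast
  have "\<And>z. norm z < e \<Longrightarrow> summable (\<lambda>k. c k * z ^ k)"
    using e(2)[of "_ + x"] by (auto simp: sums_iff)
  hence "((\<lambda>z. \<Sum>k. c k * z ^ k) has_field_derivative (\<Sum>k. diffs c k * 0 ^ k)) (at (0::real))"
    by (rule termdiffs_strong') (use e in auto)
  hence "((\<lambda>z. \<Sum>k. c k * z ^ k) has_field_derivative (\<Sum>k. diffs c k * 0 ^ k)) (at (x - x))"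
    by simp
  from DERIV_chain2[OF this DERIV_diff[OF DERIV_ident DERIV_const]]
  have "((\<lambda>y. \<Sum>k. c k * (y - x) ^ k) has_field_derivative (\<Sum>k. diffs c k * 0 ^ k)) (at x)"
    by simp
  hence "(g has_field_derivative (\<Sum>k. diffs c k * 0 ^ k)) (at x within UNIV)"
  proof (rule has_field_derivative_transform_within[OF _ e(1)])
    fix y :: real assume "dist y x < e"
    thus "(\<Sum>k. c k * (y - x) ^ k) = g y" using e(2)[of y] by (simp add: sums_iff dist_real_def)
  qed auto
  thus ?thesis by blast
qed

text \<open>If h(u) = g(u^2) with g real-analytic near 0, then h'(0) = 0: the boundary
  condition that makes the radial equation regular at the origin.\<close>
lemma even_analytic_deriv_zero:
  fixes h g :: "real \<Rightarrow> real"
  assumes g: "real_analytic_on g {0..<r\<^sup>2}" and r: "r > 0"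
    and hg: "\<forall>u\<in>{0..<r}. h u = g (u\<^sup>2)"
    and hd: "(h has_real_derivative d) (at 0 within {0..<r})"
  shows "d = 0"
proof -
  obtain g' where g': "(g has_real_derivative g') (at 0)"
    using real_analytic_differentiable[OF g, of 0] r by auto
  have "((\<lambda>u. g (u\<^sup>2)) has_real_derivative g' * (2 * 0)) (at 0)"
    using DERIV_chain2[OF _ DERIV_pow[of 2 0]] g' by simp
  hence "((\<lambda>u. g (u\<^sup>2)) has_real_derivative 0) (at 0 within {0..<r})"
    by (simp add: has_field_derivative_at_within)
  hence "(h has_real_derivative 0) (at 0 within {0..<r})"
    by (rule has_field_derivative_transform_within[OF _ r]) (use hg r in auto)
  moreover have "at 0 within {0..<r} \<noteq> bot"
    using r by (simp add: trivial_limit_within)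
  ultimately show ?thesis using has_field_derivative_unique hd by blast
qed

text \<open>If s (1 - e^(-k/s)) <= x <= s/2 then k exceeds x by at most 2 x^2/s; as the
  scale s grows this pins the rescaled potential to its lower bound x.\<close>
lemma log_defect_squeeze:
  fixes s k x :: real
  assumes s: "s > 0" and x: "0 \<le> x" "x \<le> s / 2"
    and defect: "s * (1 - exp (- k / s)) \<le> x"
  shows "k \<le> x + 2 * x\<^sup>2 / s"
proof -
  define y where "y = x / s"
  have y: "0 \<le> y" "y \<le> 1/2" using x s by (auto simp: y_def field_simps)
  have "1 - exp (- (k / s)) \<le> y"
    using defect s by (simp add: y_def pos_le_divide_eq mult.commute)
  hence "exp (- (k / s)) \<ge> 1 - y" by simp
  hence "exp (k / s) * (1 - y) \<le> exp (k / s) * exp (- (k / s))"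
    by (rule mult_left_mono) simp
  hence "exp (k / s) * (1 - y) \<le> 1" by (simp add: exp_minus)
  hence "exp (k / s) \<le> 1 / (1 - y)" using y by (simp add: le_divide_eq)
  moreover have "1 + k / s \<le> exp (k / s)" by (rule exp_ge_add_one_self)
  ultimately have "k / s \<le> 1 / (1 - y) - 1" by linarith
  also have "\<dots> = y / (1 - y)" using y by (simp add: field_simps)
  also have "\<dots> \<le> y + 2 * y\<^sup>2"
  proof -
    have "0 \<le> y\<^sup>2 * (1 - 2 * y)" using y by simp
    hence "y \<le> (y + 2 * y\<^sup>2) * (1 - y)" by (simp add: algebra_simps power2_eq_square)
    thus ?thesis using y by (simp add: field_simps)
  qed
  finally have "k \<le> s * (y + 2 * y\<^sup>2)" using s by (simp add: field_simps)
  also have "\<dots> = x + 2 * x\<^sup>2 / s" using s by (simp add: y_def field_simps power2_eq_square)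
  finally show ?thesis .
qed

lemma uniform_limit_squeeze:
  fixes K :: "real \<Rightarrow> real \<Rightarrow> real" and L s :: "real \<Rightarrow> real"
  assumes s: "filterlim s at_top at_top"
    and L_bounded: "bounded (L ` C)" and L_nonneg: "\<And>u. u \<in> C \<Longrightarrow> 0 \<le> L u"
    and trapped: "eventually (\<lambda>r. \<forall>u\<in>C. L u \<le> K r u \<and> s r * (1 - exp (- K r u / s r)) \<le> L u) at_top"
  shows "uniform_limit C K L at_top"
proof (unfold uniform_limit_iff, intro allI impI)
  fix \<epsilon> :: real assume \<epsilon>: "\<epsilon> > 0"
  obtain B where B: "\<And>u. u \<in> C \<Longrightarrow> L u \<le> B" and B0: "B \<ge> 0"
  proof -
    obtain B where "\<forall>y\<in>L ` C. norm y \<le> B" using L_bounded bounded_iff by blast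
    thus thesis using that[of "max B 0"] by fastforce
  qed
  have "eventually (\<lambda>r. max (2 * B) (2 * B\<^sup>2 / \<epsilon>) < s r) at_top"
    using s unfolding filterlim_at_top_dense by blast
  with trapped show "eventually (\<lambda>r. \<forall>u\<in>C. dist (K r u) (L u) < \<epsilon>) at_top"
  proof eventually_elim
    case (elim r)
    show ?case
    proof
      fix u assume u: "u \<in> C"
      have s_pos: "s r > 0" and x_half: "L u \<le> s r / 2"
        using elim(2) B[OF u] B0 by auto
      have "K r u \<le> L u + 2 * (L u)\<^sup>2 / s r"
        by (rule log_defect_squeeze[OF s_pos L_nonneg[OF u] x_half]) (use elim(1) u in blast)
      also have "2 * (L u)\<^sup>2 / s r \<le> 2 * B\<^sup>2 / s r"
        using B[OF u] L_nonneg[OF u] s_pos by (intro divide_right_mono mult_left_mono power_mono) auto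
      also have "\<dots> < \<epsilon>"
        using elim(2) s_pos \<epsilon> by (simp add: field_simps)
      finally show "dist (K r u) (L u) < \<epsilon>"
        using elim(1) u by (auto simp: dist_real_def)
    qed
  qed
qed

lemma DM_continuous: "continuous_on UNIV (DM M n)"
  by (cases M) (auto intro!: continuous_intros)

lemma DM_pos: "u > 0 \<Longrightarrow> DM M n u > 0"
  by (cases M) simp_all

lemma DM_nonneg: "u \<ge> 0 \<Longrightarrow> DM M n u \<ge> 0"
  by (cases M) auto

lemma DM_mono: "0 \<le> u \<Longrightarrow> u \<le> v \<Longrightarrow> DM M n u \<le> DM M n v"
proof -
  assume uv: "0 \<le> u" "u \<le> v"
  have cosh: "cosh (u/2) \<le> cosh (v/2)" using uv by (simp add: cosh_real_nonneg_le_iff)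
  show ?thesis
    by (cases M) (use uv cosh in \<open>auto intro!: mult_mono power_mono\<close>)
qed

text \<open>D is the radial density, F(u) = int_0^u n D and K_inf(u) = int_0^u F^(1/n);
  K_inf will be the limit of the rescaled potentials.\<close>
locale MA_density =
  fixes n :: nat and D F Kinf :: "real \<Rightarrow> real"
  assumes n2: "n \<ge> 2"
    and D_pos: "\<And>u. u > 0 \<Longrightarrow> D u > 0"
    and D_nonneg: "\<And>u. 0 \<le> u \<Longrightarrow> D u \<ge> 0"
    and D_mono: "\<And>u v. 0 \<le> u \<Longrightarrow> u \<le> v \<Longrightarrow> D u \<le> D v"
    and F_deriv: "\<And>u. 0 \<le> u \<Longrightarrow> (F has_real_derivative n * D u) (at u within {0..})"
    and F_0: "F 0 = 0"
    and Kinf_deriv: "\<And>u. 0 \<le> u \<Longrightarrow> (Kinf has_real_derivative root n (F u)) (at u within {0..})"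
    and Kinf_0: "Kinf 0 = 0"
begin

lemma F_deriv_on: "u \<in> {0..<r} \<Longrightarrow> (F has_real_derivative n * D u) (at u within {0..<r})"
  by (rule DERIV_subset[OF F_deriv]) auto

lemma Kinf_deriv_on: "u \<in> {0..<r} \<Longrightarrow> (Kinf has_real_derivative root n (F u)) (at u within {0..<r})"
  by (rule DERIV_subset[OF Kinf_deriv]) auto

lemma F_mono:
  assumes "0 \<le> x" "x \<le> y" shows "F x \<le> F y"
proof (rule nonneg_deriv_imp_le[where r = "y + 1", OF F_deriv_on])
  show "0 \<le> real n * D t" if "x < t" for t using D_nonneg[of t] that assms by simp
qed (use assms in auto)

lemma F_nonneg: "0 \<le> u \<Longrightarrow> 0 \<le> F u"
  using F_mono[of 0 u] F_0 by simp

lemma F_1_pos: "F 1 > 0"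
proof -
  define d where "d = n * D (1/2)"
  have d_pos: "d > 0" using D_pos[of "1/2"] n2 by (simp add: d_def)
  have "F (1/2) - d * (1/2) \<le> F 1 - d * 1"
  proof (rule nonneg_deriv_imp_le[where r = 2 and f = "\<lambda>t. F t - d * t" and f' = "\<lambda>t. n * D t - d"])
    fix t :: real assume "t \<in> {0..<2}"
    thus "((\<lambda>t. F t - d * t) has_real_derivative n * D t - d) (at t within {0..<2})"
      by (auto intro!: derivative_eq_intros F_deriv_on)
  next
    fix t :: real assume "1/2 < t"
    thus "0 \<le> n * D t - d" unfolding d_def by (simp add: D_mono mult_left_mono)
  qed auto
  thus ?thesis using F_nonneg[of "1/2"] d_pos by linarith
qed

lemma Kinf_mono:
  assumes "0 \<le> x" "x \<le> y" shows "Kinf x \<le> Kinf y"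
proof (rule nonneg_deriv_imp_le[where r = "y + 1", OF Kinf_deriv_on])
  show "0 \<le> root n (F t)" if "x < t" for t
    using F_nonneg[of t] that assms by (simp add: real_root_ge_zero)
qed (use assms in auto)

lemma Kinf_nonneg: "0 \<le> u \<Longrightarrow> 0 \<le> Kinf u"
  using Kinf_mono[of 0 u] Kinf_0 by simp

lemma Kinf_continuous: "continuous_on {0..} Kinf"
  using Kinf_deriv by (meson DERIV_continuous atLeast_iff continuous_on_eq_continuous_within)

text \<open>Upper bound for the radius of a solution in terms of its central value A = h(0),
  see blowup_bound below; it is a decreasing function of A.\<close>
definition radius_bound :: "real \<Rightarrow> real" where
  "radius_bound A = 1 + ln 2 / root n (exp A * F 1)
                     + (n + 1) * exp (- A / (n + 1)) / root (n + 1) ((n + 1) * D 1 / 2)"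

lemma radius_bound_antimono:
  assumes "A \<le> B" shows "radius_bound B \<le> radius_bound A"
proof -
  have c_pos: "root (n + 1) ((n + 1) * D 1 / 2) > 0" using D_pos[of 1] by simp
  have "root n (exp A * F 1) \<le> root n (exp B * F 1)"
    using assms F_1_pos n2 by simp
  hence "ln 2 / root n (exp B * F 1) \<le> ln 2 / root n (exp A * F 1)"
    using F_1_pos n2 by (intro divide_left_mono) auto
  moreover have "exp (- B / (n + 1)) \<le> exp (- A / (n + 1))"
    using assms by (simp add: divide_right_mono)
  hence "(n + 1) * exp (- B / (n + 1)) / root (n + 1) ((n + 1) * D 1 / 2)
          \<le> (n + 1) * exp (- A / (n + 1)) / root (n + 1) ((n + 1) * D 1 / 2)"
    using c_pos by (intro divide_right_mono mult_left_mono) auto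
  ultimately show ?thesis unfolding radius_bound_def by linarith
qed

end

lemma DM_density_exists:
  assumes n2: "n \<ge> 2"
  shows "\<exists>F Kinf. MA_density n (DM M n) F Kinf"
proof -
  have "continuous_on {0..} (\<lambda>t. real n * DM M n t)"
    by (intro continuous_intros continuous_on_subset[OF DM_continuous]) simp
  then obtain F where F: "F 0 = 0" "\<forall>u\<ge>0. (F has_real_derivative n * DM M n u) (at u within {0..})"
    using antiderivative_exists by blast
  have "continuous_on {0..} F"
    using F(2) by (meson DERIV_continuous atLeast_iff continuous_on_eq_continuous_within)
  hence "continuous_on {0..} (\<lambda>t. root n (F t))" by (intro continuous_intros)
  then obtain Kinf where "Kinf 0 = 0"
      "\<forall>u\<ge>0. (Kinf has_real_derivative root n (F u)) (at u within {0..})"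
    using antiderivative_exists by blast
  with F n2 have "MA_density n (DM M n) F Kinf"
    by unfold_locales (simp_all add: DM_pos DM_nonneg DM_mono)
  thus ?thesis by blast
qed

subsection \<open>One solution of the radial equation\<close>

locale MA_solution = MA_density +
  fixes r :: real and h h' h'' :: "real \<Rightarrow> real"
  assumes r_pos: "r > 0"
    and h_deriv: "\<And>u. u \<in> {0..<r} \<Longrightarrow> (h has_real_derivative h' u) (at u within {0..<r})"
    and h'_deriv: "\<And>u. u \<in> {0..<r} \<Longrightarrow> (h' has_real_derivative h'' u) (at u within {0..<r})"
    and MA_eq: "\<And>u. u \<in> {0..<r} \<Longrightarrow> h'' u * h' u ^ (n - 1) = exp (h u) * D u"
    and h'_0: "h' 0 = 0"
    and h_blowup: "filterlim h at_top (at_left r)"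
begin

lemma h_continuous: "continuous_on {0..<r} h"
  using h_deriv by (meson DERIV_continuous continuous_on_eq_continuous_within)

lemma h_has_deriv_at:
  assumes "0 < u" "u < r" shows "(h has_real_derivative h' u) (at u)"
proof -
  have "at u within {0..<r} = at u"
    by (rule at_within_interior) (use assms in auto)
  thus ?thesis using h_deriv[of u] assms by simp
qed

lemma h'_nonzero: "0 < u \<Longrightarrow> u < r \<Longrightarrow> h' u \<noteq> 0"
  using MA_eq[of u] D_pos[of u] n2 by (auto simp: power_0_left)

lemma exists_above: assumes "u < r" shows "\<exists>v. u < v \<and> v < r \<and> h v > y"
proof -
  have "eventually (\<lambda>x. h x > y) (at_left r)"
    using h_blowup unfolding filterlim_at_top_dense by blast
  hence "eventually (\<lambda>x. h x > y \<and> x \<in> {u<..<r}) (at_left r)"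
    using eventually_at_left_real[OF assms] by (rule eventually_conj)
  from eventually_happens[OF this] show ?thesis
    using trivial_limit_at_left_real[of r] by auto
qed

text \<open>h' > 0 on (0,r): h' cannot vanish there, and a negative value would produce an
  interior minimum of h on an interval [u,v] with h(v) > h(u), where h' = 0.\<close>
lemma h'_pos: assumes u: "0 < u" "u < r" shows "h' u > 0"
proof (rule ccontr)
  assume "\<not> h' u > 0"
  with h'_nonzero[OF u] have neg: "h' u < 0" by simp
  obtain v where v: "u < v" "v < r" "h v > h u" using exists_above[OF u(2)] by blast
  have "continuous_on {u..v} h" by (rule continuous_on_subset[OF h_continuous]) (use u v in auto)
  moreover have "{u..v} \<noteq> {}" using v by simp
  ultimately obtain m where m: "m \<in> {u..v}" "\<And>y. y \<in> {u..v} \<Longrightarrow> h m \<le> h y"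
    using continuous_attains_inf[OF compact_Icc] by blast
  show False
  proof (cases "m = u")
    case True
    obtain d where d: "d > 0" "\<And>t. t > 0 \<Longrightarrow> t < d \<Longrightarrow> h u > h (u + t)"
      using DERIV_neg_dec_right[OF h_has_deriv_at[OF u] neg] by blast
    define t where "t = min d (v - u) / 2"
    have t: "t > 0" "t < d" "u + t \<in> {u..v}"
      using d(1) v(1) unfolding t_def by (auto simp: min_def field_simps)
    have "h (u + t) < h u" by (rule d(2)[OF t(1,2)])
    moreover have "h u \<le> h (u + t)" using m(2)[OF t(3)] True by simp
    ultimately show False by simp
  next
    case False
    have "m \<noteq> v" using m(2)[of u] v by auto
    with False m(1) have mi: "u < m" "m < v" by auto
    have "\<forall>y. \<bar>m - y\<bar> < min (m - u) (v - m) \<longrightarrow> h m \<le> h y"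
      using m(2) by (auto simp: abs_less_iff)
    hence "h' m = 0"
      using DERIV_local_min[OF h_has_deriv_at[of m], of "min (m - u) (v - m)"] mi u v by simp
    with h'_nonzero[of m] mi u v show False by linarith
  qed
qed

lemma h'_nonneg: "0 \<le> u \<Longrightarrow> u < r \<Longrightarrow> h' u \<ge> 0"
  using h'_pos[of u] h'_0 by (cases "u = 0") auto

lemma h_mono:
  assumes "0 \<le> x" "x \<le> y" "y < r" shows "h x \<le> h y"
proof (rule nonneg_deriv_imp_le[OF h_deriv])
  show "0 \<le> h' t" if "x < t" "t < y" for t
    using h'_nonneg[of t] that assms by simp
qed (use assms in auto)

lemma h''_pos: assumes "0 < u" "u < r" shows "h'' u > 0"
proof -
  have "h'' u * h' u ^ (n - 1) > 0" using MA_eq[of u] D_pos[of u] assms by simp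
  moreover have "h' u ^ (n - 1) > 0" using h'_pos[OF assms] by simp
  ultimately show ?thesis by (metis zero_less_mult_pos2)
qed

lemma h'_mono:
  assumes "0 \<le> x" "x \<le> y" "y < r" shows "h' x \<le> h' y"
proof (rule nonneg_deriv_imp_le[OF h'_deriv])
  show "0 \<le> h'' t" if "x < t" "t < y" for t
    using h''_pos[of t] that assms by simp
qed (use assms in auto)

lemma h'_power_deriv:
  assumes "u \<in> {0..<r}"
  shows "((\<lambda>u. h' u ^ n) has_real_derivative n * exp (h u) * D u) (at u within {0..<r})"
proof -
  have "((\<lambda>u. h' u ^ n) has_real_derivative n * h' u ^ (n - 1) * h'' u) (at u within {0..<r})"
    by (rule derivative_eq_intros h'_deriv[OF assms] refl)+ simp
  thus ?thesis using MA_eq[OF assms] by (simp add: mult_ac)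
qed

text \<open>Integrating (h'^n)' = n e^h D with h increasing: e^(h(0)) F <= h'^n <= e^(h(u)) F.\<close>
lemma gradient_lower: assumes "0 \<le> u" "u < r" shows "exp (h 0) * F u \<le> h' u ^ n"
proof -
  have "h' 0 ^ n - exp (h 0) * F 0 \<le> h' u ^ n - exp (h 0) * F u"
  proof (rule nonneg_deriv_imp_le[where f = "\<lambda>t. h' t ^ n - exp (h 0) * F t"
        and f' = "\<lambda>t. n * exp (h t) * D t - exp (h 0) * (n * D t)"])
    fix t assume "t \<in> {0..<r}"
    thus "((\<lambda>t. h' t ^ n - exp (h 0) * F t) has_real_derivative
            n * exp (h t) * D t - exp (h 0) * (n * D t)) (at t within {0..<r})"
      by (intro derivative_intros DERIV_cmult h'_power_deriv F_deriv_on)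
  next
    fix t assume t: "0 < t" "t < u"
    have "n * (exp (h 0) * D t) \<le> n * (exp (h t) * D t)"
      using h_mono[of 0 t] D_nonneg[of t] t assms by (intro mult_left_mono mult_right_mono) auto
    thus "0 \<le> n * exp (h t) * D t - exp (h 0) * (n * D t)"
      by (simp add: algebra_simps)
  qed (use assms in auto)
  thus ?thesis using h'_0 F_0 n2 by (simp add: power_0_left)
qed

lemma gradient_upper: assumes "0 \<le> u" "u < r" shows "h' u ^ n \<le> exp (h u) * F u"
proof -
  have "exp (h u) * F 0 - h' 0 ^ n \<le> exp (h u) * F u - h' u ^ n"
  proof (rule nonneg_deriv_imp_le[where f = "\<lambda>t. exp (h u) * F t - h' t ^ n"
        and f' = "\<lambda>t. exp (h u) * (n * D t) - n * exp (h t) * D t"])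
    fix t assume "t \<in> {0..<r}"
    thus "((\<lambda>t. exp (h u) * F t - h' t ^ n) has_real_derivative
            exp (h u) * (n * D t) - n * exp (h t) * D t) (at t within {0..<r})"
      by (intro derivative_intros DERIV_cmult h'_power_deriv F_deriv_on)
  next
    fix t assume t: "0 < t" "t < u"
    have "n * (exp (h t) * D t) \<le> n * (exp (h u) * D t)"
      using h_mono[of t u] D_nonneg[of t] t assms by (intro mult_left_mono mult_right_mono) auto
    thus "0 \<le> exp (h u) * (n * D t) - n * exp (h t) * D t"
      by (simp add: algebra_simps)
  qed (use assms in auto)
  thus ?thesis using h'_0 F_0 n2 by (simp add: power_0_left)
qed

end

subsection \<open>Estimates for one solution\<close>

context MA_solution
begin

text \<open>Radius bound, step 1: h gains ln 2 over h(1) within distance ln 2 / h'(1),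
  and h'(1) >= (e^(h(0)) F(1))^(1/n) by gradient_lower.\<close>
lemma doubling_point:
  assumes r1: "r > 1"
  obtains u2 where "1 \<le> u2" "u2 < r" "h u2 = h 1 + ln 2"
    "u2 - 1 \<le> ln 2 / root n (exp (h 0) * F 1)"
proof -
  define q where "q = root n (exp (h 0) * F 1)"
  have q_pos: "q > 0" using F_1_pos n2 by (simp add: q_def)
  have q_le: "q \<le> h' 1"
  proof -
    have "q ^ n = exp (h 0) * F 1" using F_1_pos n2 by (simp add: q_def)
    also have "\<dots> \<le> h' 1 ^ n" using gradient_lower[of 1] r1 by simp
    finally show ?thesis
      by (rule power_le_imp_le_base_pos) (use h'_nonneg[of 1] r1 n2 in auto)
  qed
  obtain v where v: "1 < v" "v < r" "h v > h 1 + ln 2"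
    using exists_above[of 1 "h 1 + ln 2"] r1 by blast
  have "continuous_on {1..v} h" by (rule continuous_on_subset[OF h_continuous]) (use v in auto)
  then obtain u2 where u2: "1 \<le> u2" "u2 \<le> v" "h u2 = h 1 + ln 2"
    using IVT'[of h 1 "h 1 + ln 2" v] v by auto
  have "h 1 - h' 1 * 1 \<le> h u2 - h' 1 * u2"
  proof (rule nonneg_deriv_imp_le[where f = "\<lambda>t. h t - h' 1 * t" and f' = "\<lambda>t. h' t - h' 1"])
    fix t assume t: "t \<in> {0..<r}"
    show "((\<lambda>t. h t - h' 1 * t) has_real_derivative h' t - h' 1) (at t within {0..<r})"
      by (rule derivative_eq_intros h_deriv t | simp)+
  next
    fix t assume "1 < t" "t < u2"
    thus "0 \<le> h' t - h' 1" using h'_mono[of 1 t] u2 v by simp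
  qed (use u2 v in auto)
  hence "h' 1 * (u2 - 1) \<le> ln 2" using u2 by (simp add: algebra_simps)
  hence "q * (u2 - 1) \<le> ln 2"
    using q_le u2 by (meson diff_ge_0_iff_ge mult_right_mono order_trans)
  hence "u2 - 1 \<le> ln 2 / q" using q_pos by (simp add: field_simps)
  thus thesis using that u2 v unfolding q_def by auto
qed

text \<open>Radius bound, step 2: beyond such a point u2 the quantity
  h'^(n+1) - (n+1) D(1) e^h is increasing, hence h'^(n+1) >= (n+1) D(1) e^h / 2.\<close>
lemma energy_growth:
  assumes u2: "1 \<le> u2" "h u2 = h 1 + ln 2" and u: "u2 \<le> u" "u < r"
  shows "(n + 1) * D 1 * exp (h u) / 2 \<le> h' u ^ (n + 1)"
proof -
  define d where "d = D 1"
  have d_pos: "d > 0" using D_pos by (simp add: d_def)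
  have "h' 1 ^ (n + 1) - (n + 1) * d * exp (h 1) \<le> h' u ^ (n + 1) - (n + 1) * d * exp (h u)"
  proof (rule nonneg_deriv_imp_le[where f = "\<lambda>t. h' t ^ (n + 1) - (n + 1) * d * exp (h t)"
        and f' = "\<lambda>t. (n + 1) * h' t * exp (h t) * (D t - d)"])
    fix t assume t: "t \<in> {0..<r}"
    have "((\<lambda>t. h' t ^ (n + 1) - (n + 1) * d * exp (h t)) has_real_derivative
            of_nat (n + 1) * h' t ^ n * h'' t - (n + 1) * d * (exp (h t) * h' t)) (at t within {0..<r})"
      by (rule derivative_eq_intros h_deriv h'_deriv t | simp)+
    moreover have "h' t ^ n * h'' t = h' t * (exp (h t) * D t)"
      using MA_eq[OF t] n2 by (cases n) (auto simp: mult_ac)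
    ultimately show "((\<lambda>t. h' t ^ (n + 1) - (n + 1) * d * exp (h t)) has_real_derivative
            (n + 1) * h' t * exp (h t) * (D t - d)) (at t within {0..<r})"
      by (simp add: algebra_simps)
  next
    fix t assume t: "1 < t" "t < u"
    have "D t \<ge> d" using t unfolding d_def by (intro D_mono) auto
    thus "0 \<le> (n + 1) * h' t * exp (h t) * (D t - d)" using h'_nonneg[of t] t u by simp
  qed (use u u2 in auto)
  moreover have "0 \<le> h' 1 ^ (n + 1)" using h'_nonneg[of 1] u u2 by simp
  moreover have "(n + 1) * d * exp (h 1) \<le> (n + 1) * d * exp (h u) / 2"
  proof -
    have "2 * exp (h 1) = exp (h u2)" using u2 by (simp add: exp_add)
    also have "\<dots> \<le> exp (h u)" using h_mono[of u2 u] u u2 by simp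
    finally have "exp (h 1) \<le> exp (h u) / 2" by simp
    hence "(n + 1) * d * exp (h 1) \<le> (n + 1) * d * (exp (h u) / 2)"
      using d_pos by (intro mult_left_mono) auto
    thus ?thesis by simp
  qed
  ultimately show ?thesis unfolding d_def by linarith
qed

lemma gradient_exp_lower:
  assumes "1 \<le> u2" "h u2 = h 1 + ln 2" "u2 \<le> u" "u < r"
  shows "root (n + 1) ((n + 1) * D 1 / 2) * exp (h u / (n + 1)) \<le> h' u"
proof -
  define c where "c = root (n + 1) ((n + 1) * D 1 / 2)"
  have c_pow: "c ^ (n + 1) = (n + 1) * D 1 / 2"
    unfolding c_def by (rule real_root_pow_pos2) (use D_pos[of 1] in auto)
  have exp_pow: "exp (h u / (n + 1)) ^ (n + 1) = exp (h u)"
    using exp_div_power[of "n + 1" "h u"] by simp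
  have "(c * exp (h u / (n + 1))) ^ (n + 1) = c ^ (n + 1) * exp (h u / (n + 1)) ^ (n + 1)"
    by (rule power_mult_distrib)
  also have "\<dots> = (n + 1) * D 1 * exp (h u) / 2" unfolding c_pow exp_pow by simp
  also have "\<dots> \<le> h' u ^ (n + 1)" by (rule energy_growth[OF assms])
  finally show ?thesis unfolding c_def
    by (rule power_le_imp_le_base_pos) (use h'_nonneg[of u] assms in auto)
qed

text \<open>Radius bound, step 3: once h' >= c e^(h/p), the negative function -p e^(-h/p)
  grows at rate at least c, which it can sustain only over a length p e^(-h(u2)/p) / c.\<close>
lemma remaining_length:
  assumes p: "p > 0" and c: "c > 0" and u2: "0 \<le> u2" "u2 < r"
    and grad: "\<And>u. u2 \<le> u \<Longrightarrow> u < r \<Longrightarrow> c * exp (h u / p) \<le> h' u"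
  shows "r \<le> u2 + p * exp (- h u2 / p) / c"
proof (rule ccontr)
  define u where "u = u2 + p * exp (- h u2 / p) / c"
  assume "\<not> r \<le> u2 + p * exp (- h u2 / p) / c"
  hence u: "u2 \<le> u" "u < r" using p c by (auto simp: u_def)
  have "- p * exp (- h u2 / p) - c * u2 \<le> - p * exp (- h u / p) - c * u"
  proof (rule nonneg_deriv_imp_le[where f = "\<lambda>t. - p * exp (- h t / p) - c * t"
        and f' = "\<lambda>t. exp (- h t / p) * h' t - c"])
    fix t assume t: "t \<in> {0..<r}"
    show "((\<lambda>t. - p * exp (- h t / p) - c * t) has_real_derivative exp (- h t / p) * h' t - c)
            (at t within {0..<r})"
      by (rule derivative_eq_intros h_deriv t refl | use p in \<open>simp add: field_simps\<close>)+
  next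
    fix t assume t: "u2 < t" "t < u"
    have "exp (- h t / p) * (c * exp (h t / p)) \<le> exp (- h t / p) * h' t"
      using grad[of t] t u by (intro mult_left_mono) auto
    moreover have "exp (- h t / p) * (c * exp (h t / p)) = c"
      by (simp add: mult.left_commute flip: exp_add)
    ultimately show "0 \<le> exp (- h t / p) * h' t - c" by linarith
  qed (use u u2 in auto)
  hence "c * (u - u2) \<le> p * exp (- h u2 / p) - p * exp (- h u / p)"
    by (simp add: algebra_simps)
  also have "\<dots> < p * exp (- h u2 / p)" using p by simp
  finally show False using c by (simp add: u_def)
qed

lemma blowup_bound:
  assumes r1: "r > 1" shows "r \<le> radius_bound (h 0)"
proof -
  define c where "c = root (n + 1) ((n + 1) * D 1 / 2)"
  have c_pos: "c > 0" using D_pos[of 1] by (simp add: c_def)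
  obtain u2 where u2: "1 \<le> u2" "u2 < r" "h u2 = h 1 + ln 2"
      "u2 - 1 \<le> ln 2 / root n (exp (h 0) * F 1)"
    using doubling_point[OF r1] by blast
  have "r \<le> u2 + (n + 1) * exp (- h u2 / (n + 1)) / c"
    by (rule remaining_length) (use c_pos u2 gradient_exp_lower in \<open>auto simp: c_def\<close>)
  moreover have "h 0 \<le> h u2" using h_mono[of 0 u2] u2 by simp
  hence "- h u2 / (n + 1) \<le> - h 0 / (n + 1)" by (intro divide_right_mono) auto
  hence "exp (- h u2 / (n + 1)) \<le> exp (- h 0 / (n + 1))" by simp
  hence "(n + 1) * exp (- h u2 / (n + 1)) / c \<le> (n + 1) * exp (- h 0 / (n + 1)) / c"
    using c_pos by (intro divide_right_mono mult_left_mono) auto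
  ultimately show ?thesis using u2(4) by (simp add: radius_bound_def c_def)
qed

text \<open>Lower bound of the rescaled potential by the limit profile: by gradient_lower,
  c h' >= F^(1/n) = K_inf' with c = e^(-h(0)/n).\<close>
lemma Kinf_le_rescaled:
  assumes "0 \<le> u" "u < r" shows "Kinf u \<le> exp (- h 0 / n) * (h u - h 0)"
proof -
  define c where "c = exp (- h 0 / n)"
  have cn: "c ^ n = exp (- h 0)" using exp_div_power[of n "- h 0"] n2 by (simp add: c_def)
  have "c * (h 0 - h 0) - Kinf 0 \<le> c * (h u - h 0) - Kinf u"
  proof (rule nonneg_deriv_imp_le[where f = "\<lambda>t. c * (h t - h 0) - Kinf t"
        and f' = "\<lambda>t. c * h' t - root n (F t)"])
    fix t assume t: "t \<in> {0..<r}"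
    show "((\<lambda>t. c * (h t - h 0) - Kinf t) has_real_derivative c * h' t - root n (F t))
            (at t within {0..<r})"
      by (rule derivative_eq_intros h_deriv t Kinf_deriv_on | simp)+
  next
    fix t assume t: "0 < t" "t < u"
    have "root n (F t) ^ n = c ^ n * (exp (h 0) * F t)"
      using F_nonneg[of t] t n2 by (simp add: cn mult.assoc[symmetric] flip: exp_add)
    also have "\<dots> \<le> c ^ n * h' t ^ n"
      using gradient_lower[of t] t assms by (intro mult_left_mono) (auto simp: c_def)
    also have "\<dots> = (c * h' t) ^ n" by (simp add: power_mult_distrib)
    finally have "root n (F t) \<le> c * h' t"
      by (rule power_le_imp_le_base_pos) (use h'_nonneg[of t] t assms n2 in \<open>auto simp: c_def\<close>)
    thus "0 \<le> c * h' t - root n (F t)" by simp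
  qed (use assms in auto)
  thus ?thesis using Kinf_0 by (simp add: c_def)
qed

text \<open>Upper bound: by gradient_upper, c e^(-(h - h(0))/n) h' <= F^(1/n); integrating,
  n c (1 - e^(-(h - h(0))/n)) <= K_inf.\<close>
lemma rescaled_defect_le_Kinf:
  assumes "0 \<le> u" "u < r"
  shows "n * exp (- h 0 / n) * (1 - exp (- (h u - h 0) / n)) \<le> Kinf u"
proof -
  define c where "c = exp (- h 0 / n)"
  define E where "E t = exp (- (h t - h 0) / n)" for t
  have cn: "c ^ n = exp (- h 0)" using exp_div_power[of n "- h 0"] n2 by (simp add: c_def)
  have "Kinf 0 + n * c * E 0 \<le> Kinf u + n * c * E u"
  proof (rule nonneg_deriv_imp_le[where f = "\<lambda>t. Kinf t + n * c * E t"
        and f' = "\<lambda>t. root n (F t) - c * E t * h' t"])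
    fix t assume t: "t \<in> {0..<r}"
    show "((\<lambda>t. Kinf t + n * c * E t) has_real_derivative root n (F t) - c * E t * h' t)
            (at t within {0..<r})"
      unfolding E_def by (rule derivative_eq_intros h_deriv t Kinf_deriv_on refl | use n2 in simp)+
  next
    fix t assume t: "0 < t" "t < u"
    have "(c * h' t) ^ n = c ^ n * h' t ^ n" by (simp add: power_mult_distrib)
    also have "\<dots> \<le> exp (- h 0) * (exp (h t) * F t)"
      unfolding cn by (rule mult_left_mono[OF gradient_upper]) (use t assms in auto)
    also have "\<dots> = (exp ((h t - h 0) / n) * root n (F t)) ^ n"
      using exp_div_power[of n "h t - h 0"] F_nonneg[of t] t n2
      by (simp add: power_mult_distrib exp_diff exp_minus field_simps)
    finally have "c * h' t \<le> exp ((h t - h 0) / n) * root n (F t)"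
      by (rule power_le_imp_le_base_pos) (use F_nonneg[of t] t n2 in \<open>auto simp: real_root_ge_zero\<close>)
    hence "E t * (c * h' t) \<le> E t * (exp ((h t - h 0) / n) * root n (F t))"
      by (intro mult_left_mono) (simp_all add: E_def)
    also have "\<dots> = root n (F t)"
      by (simp add: E_def mult.assoc[symmetric] diff_divide_distrib flip: exp_add)
    finally show "0 \<le> root n (F t) - c * E t * h' t" by (simp add: mult_ac)
  qed (use assms in auto)
  thus ?thesis using Kinf_0 by (simp add: E_def c_def algebra_simps)
qed

end

text \<open>Rescaling K = c (h - h(0)) with c = e^(-h(0)/n) turns h'' h'^(n-1) = e^h D into
  K'' K'^(n-1) = exp(e^(h(0)/n) K) D, because c^n e^h = e^(h - h(0)).\<close>
lemma rescaled_solves_MA: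
  assumes n: "n \<ge> 1" and sol: "solves_MA n r h (\<lambda>u. exp (h u) * D u)"
  shows "solves_MA n r (\<lambda>u. exp (- h 0 / n) * (h u - h 0))
           (\<lambda>u. exp (exp (h 0 / n) * (exp (- h 0 / n) * (h u - h 0))) * D u)"
proof -
  define c where "c = exp (- h 0 / n)"
  obtain h' h'' where hh: "\<forall>u\<in>{0..<r}.
      (h has_real_derivative h' u) (at u within {0..<r}) \<and>
      (h' has_real_derivative h'' u) (at u within {0..<r}) \<and>
      h'' u * h' u ^ (n - 1) = exp (h u) * D u"
    using sol unfolding solves_MA_def by blast
  have cn: "c ^ n = exp (- h 0)" using exp_div_power[of n "- h 0"] n by (simp add: c_def)
  have inverse: "exp (h 0 / n) * c = 1" by (simp add: c_def flip: exp_add)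
  show ?thesis unfolding solves_MA_def
  proof (rule exI[of _ "\<lambda>u. c * h' u"], rule exI[of _ "\<lambda>u. c * h'' u"], intro ballI conjI)
    fix u assume u: "u \<in> {0..<r}"
    show "((\<lambda>u. exp (- h 0 / n) * (h u - h 0)) has_real_derivative c * h' u) (at u within {0..<r})"
      using hh u by (auto simp: c_def intro!: derivative_eq_intros)
    show "((\<lambda>u. c * h' u) has_real_derivative c * h'' u) (at u within {0..<r})"
      using hh u by (auto intro!: derivative_eq_intros)
    have "c * h'' u * (c * h' u) ^ (n - 1) = c ^ n * (h'' u * h' u ^ (n - 1))"
      using n by (cases n) (simp_all add: power_mult_distrib mult_ac)
    also have "\<dots> = exp (h u - h 0) * D u"
      using hh u cn by (simp add: exp_diff exp_minus field_simps)
    also have "h u - h 0 = exp (h 0 / n) * (exp (- h 0 / n) * (h u - h 0))"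
      using inverse by (simp add: c_def mult.assoc[symmetric])
    finally show "c * h'' u * (c * h' u) ^ (n - 1)
        = exp (exp (h 0 / n) * (exp (- h 0 / n) * (h u - h 0))) * D u" .
  qed
qed

lemma rescaled_blowup:
  fixes h :: "'a \<Rightarrow> real" and b c :: real
  assumes "filterlim h at_top F" and "c > 0"
  shows "filterlim (\<lambda>u. c * (h u - b)) at_top F"
proof -
  have "filterlim (\<lambda>u. - b + h u) at_top F"
    by (rule filterlim_tendsto_add_at_top[OF tendsto_const assms(1)])
  hence "filterlim (\<lambda>u. c * (- b + h u)) at_top F"
    by (rule filterlim_tendsto_pos_mult_at_top[OF tendsto_const assms(2)])
  thus ?thesis by simp
qed

lemma scale_tendsto_top:
  fixes a :: "real \<Rightarrow> real" and m :: real
  assumes m: "m > 0" and a: "filterlim a at_bot at_top"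
  shows "filterlim (\<lambda>r. m * exp (- a r / m)) at_top at_top"
proof -
  have neg: "filterlim (\<lambda>r. - a r) at_top at_top" using a by (simp add: filterlim_uminus_at_bot)
  have "filterlim (\<lambda>r. 1 / m * - a r) at_top at_top"
    by (rule filterlim_tendsto_pos_mult_at_top[OF tendsto_const _ neg]) (use m in simp)
  moreover have "(\<lambda>r. - a r / m) = (\<lambda>r. 1 / m * - a r)" by auto
  ultimately have "filterlim (\<lambda>r. exp (- a r / m)) at_top at_top"
    using filterlim_compose[OF exp_at_top] by metis
  thus ?thesis by (rule filterlim_tendsto_pos_mult_at_top[OF tendsto_const m])
qed

context MA_density
begin

lemma solution_instance:
  assumes r: "r > 0" and sol: "solves_MA n r h (\<lambda>u. exp (h u) * D u)"
    and blowup: "filterlim h at_top (at_left r)"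
    and even: "real_analytic_on g {0..<r\<^sup>2}" "\<forall>u\<in>{0..<r}. h u = g (u\<^sup>2)"
  shows "\<exists>h' h''. MA_solution n D F Kinf r h h' h''"
proof -
  obtain h' h'' where hh: "\<forall>u\<in>{0..<r}.
      (h has_real_derivative h' u) (at u within {0..<r}) \<and>
      (h' has_real_derivative h'' u) (at u within {0..<r}) \<and>
      h'' u * h' u ^ (n - 1) = exp (h u) * D u"
    using sol unfolding solves_MA_def by blast
  have "h' 0 = 0" by (rule even_analytic_deriv_zero[OF even(1) r even(2)]) (use hh r in auto)
  with hh r blowup have "MA_solution n D F Kinf r h h' h''"
    by (intro MA_solution.intro MA_density_axioms MA_solution_axioms.intro) auto
  thus ?thesis by blast
qed

text \<open>Solutions on larger and larger balls have central values tending to -oo,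
  since r <= B(h_r(0)) with B decreasing.\<close>
lemma central_value_tendsto_bot:
  fixes h :: "real \<Rightarrow> real \<Rightarrow> real"
  assumes family: "\<And>r. r > 0 \<Longrightarrow> \<exists>h' h''. MA_solution n D F Kinf r (h r) h' h''"
  shows "filterlim (\<lambda>r. h r 0) at_bot at_top"
  unfolding filterlim_at_bot
proof
  fix Z
  show "eventually (\<lambda>r. h r 0 \<le> Z) at_top"
    using eventually_gt_at_top[of "max 1 (radius_bound Z)"]
  proof eventually_elim
    case (elim r)
    obtain h' h'' where "MA_solution n D F Kinf r (h r) h' h''" using family[of r] elim by auto
    then interpret S: MA_solution n D F Kinf r "h r" h' h'' .
    show "h r 0 \<le> Z"
    proof (rule ccontr)
      assume "\<not> h r 0 \<le> Z"
      hence "radius_bound (h r 0) \<le> radius_bound Z" by (intro radius_bound_antimono) simp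
      moreover have "r \<le> radius_bound (h r 0)" using S.blowup_bound elim by simp
      ultimately show False using elim by simp
    qed
  qed
qed

text \<open>The rescaled potentials converge to K_inf uniformly on compact subsets of [0,oo):
  they are squeezed between the bounds of Kinf_le_rescaled and rescaled_defect_le_Kinf,
  whose scales n e^(-h_r(0)/n) tend to oo.\<close>
lemma rescaled_uniform_limit:
  fixes h :: "real \<Rightarrow> real \<Rightarrow> real"
  assumes family: "\<And>r. r > 0 \<Longrightarrow> \<exists>h' h''. MA_solution n D F Kinf r (h r) h' h''"
    and C: "compact C" "C \<subseteq> {0..}"
  shows "uniform_limit C (\<lambda>r u. exp (- h r 0 / n) * (h r u - h r 0)) Kinf at_top"
proof (rule uniform_limit_squeeze[where s = "\<lambda>r. n * exp (- h r 0 / n)"])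
  show "filterlim (\<lambda>r. n * exp (- h r 0 / n)) at_top at_top"
    using scale_tendsto_top[OF _ central_value_tendsto_bot[OF family]] n2 by simp
  show "bounded (Kinf ` C)"
    by (intro compact_imp_bounded compact_continuous_image C(1)
        continuous_on_subset[OF Kinf_continuous C(2)])
  show "0 \<le> Kinf u" if "u \<in> C" for u using Kinf_nonneg C(2) that by auto
  obtain B where B: "\<forall>u\<in>C. norm u \<le> B" using compact_imp_bounded[OF C(1)] bounded_iff by blast
  show "eventually (\<lambda>r. \<forall>u\<in>C. Kinf u \<le> exp (- h r 0 / n) * (h r u - h r 0) \<and>
          n * exp (- h r 0 / n) * (1 - exp (- (exp (- h r 0 / n) * (h r u - h r 0))
            / (n * exp (- h r 0 / n)))) \<le> Kinf u) at_top"
    using eventually_gt_at_top[of "max B 0"]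
  proof eventually_elim
    case (elim r)
    obtain h' h'' where "MA_solution n D F Kinf r (h r) h' h''" using family[of r] elim by auto
    then interpret S: MA_solution n D F Kinf r "h r" h' h'' .
    show ?case
    proof
      fix u assume "u \<in> C"
      hence u: "0 \<le> u" "u < r" using B C(2) elim by force+
      have "- (exp (- h r 0 / n) * (h r u - h r 0)) / (n * exp (- h r 0 / n)) = - (h r u - h r 0) / n"
        using n2 by (simp add: field_simps)
      thus "Kinf u \<le> exp (- h r 0 / n) * (h r u - h r 0) \<and>
          n * exp (- h r 0 / n) * (1 - exp (- (exp (- h r 0 / n) * (h r u - h r 0))
            / (n * exp (- h r 0 / n)))) \<le> Kinf u"
        using S.Kinf_le_rescaled[OF u] S.rescaled_defect_le_Kinf[OF u] by simp
    qed
  qed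
qed

end

theorem proposition3p2:
  fixes M :: model_space and n :: nat and h :: "real \<Rightarrow> real \<Rightarrow> real"
  assumes dim: "admissible_dim M n"
    and h_sol: "\<And>r. r > 0 \<Longrightarrow> solves_MA n r (h r) (\<lambda>u. exp (h r u) * DM M n u)"
    and h_blowup: "\<And>r. r > 0 \<Longrightarrow> filterlim (h r) at_top (at_left r)"
    and h_analytic: "\<And>r. r > 0 \<Longrightarrow>
           \<exists>g. real_analytic_on g {0..<r\<^sup>2} \<and> (\<forall>u\<in>{0..<r}. h r u = g (u\<^sup>2))"
  defines "a \<equiv> (\<lambda>r. h r 0)"
    and "K \<equiv> (\<lambda>r u. exp (- h r 0 / real n) * (h r u - h r 0))"
  shows "(\<forall>r>0. solves_MA n r (K r) (\<lambda>u. exp (exp (a r / real n) * K r u) * DM M n u)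
                \<and> filterlim (K r) at_top (at_left r))
       \<and> (\<forall>r>0. \<forall>u\<in>{0..<r}. K r u \<ge> 0)
       \<and> (\<exists>Klim. continuous_on {0..} Klim \<and>
            (\<forall>C. compact C \<and> C \<subseteq> {0..} \<longrightarrow>
               (\<forall>\<epsilon>>0. \<exists>R. \<forall>r\<ge>R. \<forall>u\<in>C. \<bar>K r u - Klim u\<bar> < \<epsilon>)))"
proof -
  have n2: "n \<ge> 2" using dim by (cases M) auto
  obtain F Kinf where "MA_density n (DM M n) F Kinf" using DM_density_exists[OF n2] by blast
  then interpret MA_density n "DM M n" F Kinf .
  have family: "\<exists>h' h''. MA_solution n (DM M n) F Kinf r (h r) h' h''" if r: "r > 0" for r
    using h_analytic[OF r] solution_instance[OF r h_sol[OF r] h_blowup[OF r]] by blast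
  have rescaled: "solves_MA n r (K r) (\<lambda>u. exp (exp (a r / real n) * K r u) * DM M n u)
      \<and> filterlim (K r) at_top (at_left r)" if r: "r > 0" for r
    unfolding K_def a_def using rescaled_solves_MA[OF _ h_sol[OF r]] n2
      rescaled_blowup[OF h_blowup[OF r], of "exp (- h r 0 / n)"] by simp
  have nonneg: "K r u \<ge> 0" if r: "r > 0" and u: "u \<in> {0..<r}" for r u
  proof -
    obtain h' h'' where "MA_solution n (DM M n) F Kinf r (h r) h' h''" using family[OF r] by blast
    then interpret S: MA_solution n "DM M n" F Kinf r "h r" h' h'' .
    show ?thesis using S.h_mono[of 0 u] u unfolding K_def by simp
  qed
  have "\<forall>\<epsilon>>0. \<exists>R. \<forall>r\<ge>R. \<forall>u\<in>C. \<bar>K r u - Kinf u\<bar> < \<epsilon>" if "compact C" "C \<subseteq> {0..}" for C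
    using rescaled_uniform_limit[OF family that] unfolding K_def
    by (simp add: uniform_limit_iff eventually_at_top_linorder dist_real_def)
  thus ?thesis using rescaled nonneg Kinf_continuous by blast
qed

end
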